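(* For every cache size $k\ge 1$, there is a deterministic online paging algorithm for the discard-predictions setup that is $(1,k-1,1)$-competitive. That is, there is a constant $b$ (possibly depending on $k$) such that for every request sequence $I$ and every prediction vector $p$, the number of page faults of the algorithm satisfies $\mathrm{ALG}(I,p)\le \mathrm{OPT}(I)+(k-1)\,\eta_0(p,p^* )+\eta_1(p,p^* )+b$.
   Context: Paging: there is a universe $U$ of pages and a cache holding at most $k$ pages, initially empty. Requests $r_1,\dots,r_n\in U$ arrive online. If the requested page is not in the cache (a page fault), it must be loaded into the cache, evicting some cached page if the cache already holds $k$ pages. The cost of an algorithm is its number of page faults. An online algorithm decides evictions without knowing future requests; $\mathrm{OPT}(I)$ is the minimum cost of an offline algorithm on request sequence $I$. Along with each request $r_i$ the online algorithm receives a prediction bit $p_i\in\{0,1\}$ (which may be arbitrary). Given the ground truth vector $p^*\in\{0,1\}^n$, define for $h\in\{0,1\}$: $\eta_h(p,p^* )=|\{i\in[n] : p_i=h,\ p_i^*=1-h\}|$. An algorithm is $(\alpha,\beta,\gamma)$-competitive if there is a constant $b$ (possibly depending on $k$) such that for every instance $I$ and all predictions $p$, $\mathrm{ALG}(I,p)\le \alpha\,\mathrm{OPT}(I)+\beta\,\eta_0(p,p^* )+\gamma\,\eta_1(p,p^* )+b$ (for randomized algorithms, $\mathrm{ALG}(I,p)$ is the expected cost). Discard-predictions setup: fix the optimal offline algorithm LFD, which on a fault with full cache evicts a cached page that is never requested again if one exists, and otherwise the cached page whose next request is furthest in the future (ties broken by a fixed rule). The ground truth is $p_i^*=0$ if LFD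 keeps page $r_i$ in its cache until the next request to $r_i$ (or until the end of the sequence if there is no further request), and $p_i^*=1$ if LFD evicts $r_i$ before it is requested again. *)

theory Defs
  imports Complex_Main
begin

text \<open>A deterministic online algorithm is a policy that, on a fault with a full cache,
  names the page to evict. It sees the history of (request, prediction bit) pairs
  up to and including the current one, and the current cache content (which is
  itself determined by the history). Prediction bit True means 1, False means 0.
  If the policy names a page that is not cached, a fixed cached page is evicted
  instead (this is still a deterministic online algorithm).\<close>

type_synonym 'a policy = "('a \<times> bool) list \<Rightarrow> 'a set \<Rightarrow> 'a"

definition alg_step :: "'a policy \<Rightarrow> nat \<Rightarrow> ('a \<times> bool) list \<Rightarrow> 'a set \<Rightarrow> 'a \<Rightarrow> 'a set" where
  "alg_step pol k h C r =
     (if r \<in> C then C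
      else if card C < k then insert r C
      else (let v = (if pol h C \<in> C then pol h C else (SOME x. x \<in> C))
            in insert r (C - {v})))"

text \<open>Cache of the online algorithm before serving request number t (0-indexed).\<close>
primrec alg_cache :: "'a policy \<Rightarrow> nat \<Rightarrow> ('a \<times> bool) list \<Rightarrow> nat \<Rightarrow> 'a set" where
  "alg_cache pol k xs 0 = {}"
| "alg_cache pol k xs (Suc t) =
     alg_step pol k (take (Suc t) xs) (alg_cache pol k xs t) (fst (xs ! t))"

definition alg_cost :: "'a policy \<Rightarrow> nat \<Rightarrow> ('a \<times> bool) list \<Rightarrow> nat" where
  "alg_cost pol k xs = card {t. t < length xs \<and> fst (xs ! t) \<notin> alg_cache pol k xs t}"

text \<open>A feasible offline schedule: C t is the cache before request t; after serving
  request t the cache contains it, has at most k pages and only the requested page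
  may have been loaded.\<close>

definition feasible_schedule :: "nat \<Rightarrow> 'a list \<Rightarrow> (nat \<Rightarrow> 'a set) \<Rightarrow> bool" where
  "feasible_schedule k I C \<longleftrightarrow> C 0 = {} \<and>
     (\<forall>t < length I. I ! t \<in> C (Suc t) \<and> C (Suc t) \<subseteq> insert (I ! t) (C t)
                      \<and> card (C (Suc t)) \<le> k)"

definition schedule_cost :: "'a list \<Rightarrow> (nat \<Rightarrow> 'a set) \<Rightarrow> nat" where
  "schedule_cost I C = card {t. t < length I \<and> I ! t \<notin> C t}"

definition opt_cost :: "nat \<Rightarrow> 'a list \<Rightarrow> nat" where
  "opt_cost k I = (LEAST c. \<exists>C. feasible_schedule k I C \<and> c = schedule_cost I C)"

definition next_req :: "'a list \<Rightarrow> nat \<Rightarrow> 'a \<Rightarrow> nat" where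
  "next_req I i q = (LEAST j. i < j \<and> j < length I \<and> I ! j = q)"

definition lfd_cands :: "'a list \<Rightarrow> nat \<Rightarrow> 'a set \<Rightarrow> 'a set" where
  "lfd_cands I i C =
    (let N = {q \<in> C. \<forall>j. i < j \<and> j < length I \<longrightarrow> I ! j \<noteq> q} in
     if N \<noteq> {} then N
     else {q \<in> C. \<forall>q' \<in> C. next_req I i q' \<le> next_req I i q})"

definition lfd_step :: "('a list \<Rightarrow> nat \<Rightarrow> 'a set \<Rightarrow> 'a) \<Rightarrow> nat \<Rightarrow> 'a list \<Rightarrow> nat \<Rightarrow> 'a set \<Rightarrow> 'a set" where
  "lfd_step tie k I i C =
     (if I ! i \<in> C then C
      else if card C < k then insert (I ! i) C
      else insert (I ! i) (C - {tie I i (lfd_cands I i C)}))"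

primrec lfd_cache :: "('a list \<Rightarrow> nat \<Rightarrow> 'a set \<Rightarrow> 'a) \<Rightarrow> nat \<Rightarrow> 'a list \<Rightarrow> nat \<Rightarrow> 'a set" where
  "lfd_cache tie k I 0 = {}"
| "lfd_cache tie k I (Suc t) = lfd_step tie k I t (lfd_cache tie k I t)"

text \<open>Ground truth bit for request i (True = 1): LFD evicts I!i after serving it
  and before it is requested again (or before the end of the sequence).\<close>
definition pstar :: "('a list \<Rightarrow> nat \<Rightarrow> 'a set \<Rightarrow> 'a) \<Rightarrow> nat \<Rightarrow> 'a list \<Rightarrow> nat \<Rightarrow> bool" where
  "pstar tie k I i \<longleftrightarrow>
     (\<exists>t. i < t \<and> t \<le> length I \<and> I ! i \<notin> lfd_cache tie k I t \<and>
          (\<forall>j. i < j \<and> j < t \<longrightarrow> I ! j \<noteq> I ! i))"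

definition eta :: "bool \<Rightarrow> bool list \<Rightarrow> (nat \<Rightarrow> bool) \<Rightarrow> nat" where
  "eta h p ps = card {i. i < length p \<and> p ! i = h \<and> ps i = (\<not> h)}"

end

(* On a fault with a full cache the algorithm evicts a cached page whose most recent
   prediction bit is 1, and if there is none the least recently used page.

   The offline optimum is bounded below by the dynamic-programming cost to go, and LFD
   attains it: by an exchange argument, keeping the page that is requested sooner never
   costs more.

   A fault of the algorithm is either a first request, on which LFD faults too, or the
   next request to the page of an earlier request i whose page the algorithm evicted
   in between. If p*_i = 1, LFD also faults there; if p_i = 1 and p*_i = 0, request i
   is an eta_1 error. Otherwise the page was evicted by the LRU rule at a full-cache
   fault. Some cached page then has p* = 1 at its last request c (else the cache of the
   algorithm would equal that of LFD, which evicts such a page); all bits being 0 and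
   the evicted page being least recent, c is an eta_0 error with i < c. The evictions
   charged to c occur at distinct times, and each removes a page from the set of pages
   cached since c and not requested since; that set starts with at most k - 1 pages. *)

theory Submission
  imports Defs
begin

lemma card_insert_Diff_singleton_le: "\<lbrakk>finite C; v \<in> C\<rbrakk> \<Longrightarrow> card (insert r (C - {v})) \<le> card C"
  using card_Suc_Diff1[of C v] by (simp add: card_insert_if)

lemma card_interval_filter_Suc:
  "t < n \<Longrightarrow>
    card {s. t \<le> s \<and> s < n \<and> P s} = (if P t then 1 else 0) + card {s. Suc t \<le> s \<and> s < n \<and> P s}"
proof -
  assume "t < n"
  then have "{s. t \<le> s \<and> s < n \<and> P s} = (if P t then insert t else id) {s. Suc t \<le> s \<and> s < n \<and> P s}"
    by (auto simp: Suc_le_eq le_less)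
  then show ?thesis
    by simp
qed

lemma ex_last_before_change:
  assumes "P a" and "\<not> P b" and "a \<le> b"
  shows "\<exists>s. a \<le> s \<and> s < b \<and> P s \<and> \<not> P (Suc s)"
proof (rule ccontr)
  assume none: "\<nexists>s. a \<le> s \<and> s < b \<and> P s \<and> \<not> P (Suc s)"
  have "P s" if "a \<le> s" and "s \<le> b" for s
    using that by (induction s rule: dec_induct) (use assms(1) none in auto)
  with assms show False
    by blast
qed

lemma card_changes_decreasing_le:
  assumes "\<And>s. \<lbrakk>a \<le> s; s < b\<rbrakk> \<Longrightarrow> G (Suc s) \<subseteq> G s" and "finite (G a)" and "a \<le> b"
  shows "card {s. a \<le> s \<and> s < b \<and> G (Suc s) \<noteq> G s} + card (G b) \<le> card (G a)"
proof -
  have fin: "finite (G s)" if "a \<le> s" and "s \<le> b" for s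
    using that by (induction s rule: dec_induct) (auto intro: assms(2) finite_subset[OF assms(1)])
  from assms(3) show ?thesis
  proof (induction b rule: dec_induct)
    case (step b)
    let ?changes = "\<lambda>b. {s. a \<le> s \<and> s < b \<and> G (Suc s) \<noteq> G s}"
    have "finite (?changes b)"
      by (rule finite_subset[of _ "{..<b}"]) auto
    show ?case
    proof (cases "G (Suc b) = G b")
      case True
      then have "?changes (Suc b) = ?changes b"
        by (auto simp: less_Suc_eq)
      with step.IH True show ?thesis
        by simp
    next
      case False
      then have "?changes (Suc b) = insert b (?changes b)"
        using step.hyps(1) by (auto simp: less_Suc_eq)
      moreover have "card (G (Suc b)) < card (G b)"
        using False assms(1) step.hyps fin by (intro psubset_card_mono) auto
      ultimately show ?thesis
        using step.IH \<open>finite (?changes b)\<close> by simp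
    qed
  qed simp
qed

section \<open>Offline cost to go\<close>

definition next_caches :: "nat \<Rightarrow> 'a \<Rightarrow> 'a set \<Rightarrow> 'a set set" where
  "next_caches k r X = {Y. r \<in> Y \<and> Y \<subseteq> insert r X \<and> card Y \<le> k \<and> finite Y}"

function cost_to_go :: "nat \<Rightarrow> 'a list \<Rightarrow> nat \<Rightarrow> 'a set \<Rightarrow> nat" where
  "cost_to_go k I t X =
     (if t < length I
      then (if I ! t \<in> X then 0 else 1) + (INF Y \<in> next_caches k (I ! t) X. cost_to_go k I (Suc t) Y)
      else 0)"
  by auto
termination by (relation "measure (\<lambda>(k, I, t, X). length I - t)") auto

declare cost_to_go.simps [simp del]

lemma cost_to_go_end: "length I \<le> t \<Longrightarrow> cost_to_go k I t X = 0"
  by (subst cost_to_go.simps) simp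

lemma cost_to_go_le:
  assumes "t < length I" and "Y \<in> next_caches k (I ! t) X"
  shows "cost_to_go k I t X \<le> (if I ! t \<in> X then 0 else 1) + cost_to_go k I (Suc t) Y"
  using assms by (subst cost_to_go.simps) (simp add: cINF_lower)

lemma cost_to_go_attained:
  assumes "k \<ge> 1" and "t < length I"
  obtains Y where "Y \<in> next_caches k (I ! t) X"
    and "cost_to_go k I t X = (if I ! t \<in> X then 0 else 1) + cost_to_go k I (Suc t) Y"
proof -
  have "{I ! t} \<in> next_caches k (I ! t) X"
    using assms(1) by (simp add: next_caches_def)
  then obtain Y where Y: "Y \<in> next_caches k (I ! t) X"
    and "(INF Y \<in> next_caches k (I ! t) X. cost_to_go k I (Suc t) Y) = cost_to_go k I (Suc t) Y"
    using Inf_nat_def1[of "(\<lambda>Y. cost_to_go k I (Suc t) Y) ` next_caches k (I ! t) X"] by auto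
  with assms(2) have "cost_to_go k I t X = (if I ! t \<in> X then 0 else 1) + cost_to_go k I (Suc t) Y"
    by (subst cost_to_go.simps) simp
  with Y show thesis
    by (rule that)
qed

lemma cost_to_go_le_by_step:
  assumes "t < length I" and "Y' \<in> next_caches k (I ! t) X'"
    and "cost_to_go k I t X = (if I ! t \<in> X then 0 else 1) + cost_to_go k I (Suc t) Y"
    and "(if I ! t \<in> X' then 0 else 1) + cost_to_go k I (Suc t) Y'
      \<le> (if I ! t \<in> X then 0 else 1) + cost_to_go k I (Suc t) Y"
  shows "cost_to_go k I t X' \<le> cost_to_go k I t X"
  using cost_to_go_le[OF assms(1,2)] assms(3,4) by linarith

lemma cost_to_go_antimono:
  assumes "k \<ge> 1" and "X \<subseteq> X'"
  shows "cost_to_go k I t X' \<le> cost_to_go k I t X"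
proof (cases "t < length I")
  case True
  then obtain Y where Y: "Y \<in> next_caches k (I ! t) X"
    and eq: "cost_to_go k I t X = (if I ! t \<in> X then 0 else 1) + cost_to_go k I (Suc t) Y"
    using cost_to_go_attained[OF assms(1)] by blast
  have "Y \<in> next_caches k (I ! t) X'"
    using Y assms(2) by (auto simp: next_caches_def)
  then show ?thesis
    by (rule cost_to_go_le_by_step[OF True _ eq]) (use assms(2) in auto)
qed (simp add: cost_to_go_end)

lemma cost_to_go_Diff_singleton:
  "k \<ge> 1 \<Longrightarrow> cost_to_go k I t (X - {f}) \<le> 1 + cost_to_go k I t X"
proof (induction k I t X rule: cost_to_go.induct)
  case (1 k I t X)
  show ?case
  proof (cases "t < length I")
    case t: True
    then obtain Y where Y: "Y \<in> next_caches k (I ! t) X"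
      and eq: "cost_to_go k I t X = (if I ! t \<in> X then 0 else 1) + cost_to_go k I (Suc t) Y"
      using cost_to_go_attained[OF "1.prems"] by blast
    have "Y - {f} \<in> next_caches k (I ! t) (X - {f})" if "I ! t \<noteq> f"
      using Y that by (auto simp: next_caches_def intro: le_trans[OF card_Diff1_le])
    moreover have "Y \<in> next_caches k (I ! t) (X - {f})" if "I ! t = f"
      using Y that by (auto simp: next_caches_def)
    ultimately show ?thesis
      using cost_to_go_le[OF t] eq "1.IH"[OF t Y "1.prems"] by (cases "I ! t = f") fastforce+
  qed (simp add: cost_to_go_end)
qed

definition next_use :: "'a list \<Rightarrow> nat \<Rightarrow> 'a \<Rightarrow> nat" where
  "next_use I t q =
     (if \<exists>j. t \<le> j \<and> j < length I \<and> I ! j = q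
      then LEAST j. t \<le> j \<and> j < length I \<and> I ! j = q else length I)"

lemma next_use_le_length: "next_use I t q \<le> length I"
  unfolding next_use_def by (auto intro: Least_le[THEN order_trans])

lemma next_use_Suc: "I ! t \<noteq> q \<Longrightarrow> next_use I (Suc t) q = next_use I t q"
proof -
  assume "I ! t \<noteq> q"
  then have "(Suc t \<le> j \<and> j < length I \<and> I ! j = q) \<longleftrightarrow> (t \<le> j \<and> j < length I \<and> I ! j = q)" for j
    by (auto simp: Suc_le_eq le_less)
  then show ?thesis
    unfolding next_use_def by presburger
qed

lemma next_use_self: "t < length I \<Longrightarrow> next_use I t (I ! t) = t"
  unfolding next_use_def by (auto intro: Least_equality)

lemma next_use_le_self: "\<lbrakk>next_use I t q \<le> t; t < length I\<rbrakk> \<Longrightarrow> I ! t = q"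
  unfolding next_use_def
  by (smt (verit, ccfv_threshold) LeastI_ex le_antisym not_le)

lemma cost_to_go_exchange:
  "\<lbrakk>k \<ge> 1; f \<in> X; e \<notin> X; next_use I t e \<le> next_use I t f\<rbrakk>
   \<Longrightarrow> cost_to_go k I t (insert e (X - {f})) \<le> cost_to_go k I t X"
proof (induction k I t X rule: cost_to_go.induct)
  case (1 k I t X)
  let ?X' = "insert e (X - {f})"
  show ?case
  proof (cases "t < length I")
    case t: True
    then obtain Y where Y: "Y \<in> next_caches k (I ! t) X"
      and eq: "cost_to_go k I t X = (if I ! t \<in> X then 0 else 1) + cost_to_go k I (Suc t) Y"
      using cost_to_go_attained[OF "1.prems"(1)] by blast
    have "I ! t \<noteq> f"
      using "1.prems"(2-4) next_use_self[OF t] next_use_le_self[OF _ t] by force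
    consider "f \<notin> Y" | "f \<in> Y" "I ! t = e" | "f \<in> Y" "I ! t \<noteq> e"
      by blast
    then show ?thesis
    proof cases
      case 1
      with Y have "Y \<in> next_caches k (I ! t) ?X'"
        by (auto simp: next_caches_def)
      from cost_to_go_le_by_step[OF t this eq] \<open>I ! t \<noteq> f\<close> show ?thesis
        by auto
    next
      case 2
      with Y \<open>I ! t \<noteq> f\<close> have "Y - {f} \<in> next_caches k (I ! t) ?X'"
        by (auto simp: next_caches_def intro: le_trans[OF card_Diff1_le])
      from cost_to_go_le_by_step[OF t this eq] 2 "1.prems"(3)
        cost_to_go_Diff_singleton[OF "1.prems"(1), of I "Suc t" Y f]
      show ?thesis
        by auto
    next
      case 3
      have "e \<notin> Y"
        using Y 3 "1.prems" by (auto simp: next_caches_def)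
      moreover have "card (insert e (Y - {f})) \<le> card Y"
        using Y 3 by (intro card_insert_Diff_singleton_le) (auto simp: next_caches_def)
      ultimately have Y': "insert e (Y - {f}) \<in> next_caches k (I ! t) ?X'"
        using Y 3 \<open>I ! t \<noteq> f\<close> by (auto simp: next_caches_def)
      have "next_use I (Suc t) e \<le> next_use I (Suc t) f"
        using "1.prems"(4) 3 \<open>I ! t \<noteq> f\<close> by (simp add: next_use_Suc)
      then have "cost_to_go k I (Suc t) (insert e (Y - {f})) \<le> cost_to_go k I (Suc t) Y"
        using "1.IH"[OF t Y "1.prems"(1) \<open>f \<in> Y\<close> \<open>e \<notin> Y\<close>] by blast
      with cost_to_go_le_by_step[OF t Y' eq] 3 \<open>I ! t \<noteq> f\<close> show ?thesis
        by auto
    qed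
  qed (simp add: cost_to_go_end)
qed

lemma cost_to_go_le_faults:
  assumes "t \<le> length I"
    and "\<And>s. \<lbrakk>t \<le> s; s < length I\<rbrakk> \<Longrightarrow> C (Suc s) \<in> next_caches k (I ! s) (C s)"
  shows "cost_to_go k I t (C t) \<le> card {s. t \<le> s \<and> s < length I \<and> I ! s \<notin> C s}"
  using assms
proof (induction t rule: inc_induct)
  case (step t)
  from cost_to_go_le[OF _ step.prems[OF order_refl step.hyps(2)]] step
  show ?case
    by (auto simp: card_interval_filter_Suc)
qed (simp add: cost_to_go_end)

lemma feasible_schedule_finite:
  assumes "feasible_schedule k I C"
  shows "t \<le> length I \<Longrightarrow> finite (C t)"
proof (induction t)
  case (Suc t)
  then have "C (Suc t) \<subseteq> insert (I ! t) (C t)" and "finite (C t)"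
    using assms by (simp_all add: feasible_schedule_def)
  then show ?case
    by (simp add: finite_subset)
qed (use assms in \<open>simp add: feasible_schedule_def\<close>)

lemma cost_to_go_le_opt_cost:
  assumes "k \<ge> 1"
  shows "cost_to_go k I 0 {} \<le> opt_cost k I"
proof -
  let ?achievable = "\<lambda>c. \<exists>C. feasible_schedule k I C \<and> c = schedule_cost I C"
  have "feasible_schedule k I (\<lambda>t. if t = 0 then {} else {I ! (t - 1)})"
    using assms by (simp add: feasible_schedule_def)
  then have "?achievable (schedule_cost I (\<lambda>t. if t = 0 then {} else {I ! (t - 1)}))"
    by blast
  then have "?achievable (opt_cost k I)"
    unfolding opt_cost_def by (rule LeastI)
  then obtain C where C: "feasible_schedule k I C" and opt: "opt_cost k I = schedule_cost I C"
    by blast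
  have "cost_to_go k I 0 (C 0) \<le> card {s. 0 \<le> s \<and> s < length I \<and> I ! s \<notin> C s}"
    using C feasible_schedule_finite[OF C]
    by (intro cost_to_go_le_faults) (auto simp: feasible_schedule_def next_caches_def)
  with C opt show ?thesis
    by (simp add: feasible_schedule_def schedule_cost_def)
qed

lemma cache_subset_requested:
  assumes "C 0 = {}" and "\<And>s. s < t \<Longrightarrow> C (Suc s) \<subseteq> insert (I ! s) (C s)" and "q \<in> C t"
  shows "\<exists>j<t. I ! j = q"
  using assms(2,3)
proof (induction t)
  case (Suc t)
  then show ?case
    by (metis insert_iff less_Suc_eq subsetD)
qed (simp add: assms(1))

lemma cache_absent_until_requested:
  assumes "\<And>s. \<lbrakk>t' \<le> s; s < t\<rbrakk> \<Longrightarrow> C (Suc s) \<subseteq> insert (I ! s) (C s)"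
    and "\<And>s. \<lbrakk>t' \<le> s; s < t\<rbrakk> \<Longrightarrow> I ! s \<noteq> q"
    and "t' \<le> t" and "q \<notin> C t'"
  shows "q \<notin> C t"
  using assms(3) by (induction t rule: dec_induct) (use assms in auto)

lemma lfd_cands_subset: "lfd_cands I t X \<subseteq> X"
  by (auto simp: lfd_cands_def Let_def)

lemma lfd_cands_nonempty:
  assumes "finite X" and "X \<noteq> {}"
  shows "lfd_cands I t X \<noteq> {}"
proof -
  have "Max (next_req I t ` X) \<in> next_req I t ` X"
    using assms by simp
  then obtain q where "q \<in> X" and "next_req I t q = Max (next_req I t ` X)"
    by auto
  with assms show ?thesis
    by (auto simp: lfd_cands_def Let_def)
qed

section \<open>Optimality of LFD\<close>

locale lfd_run =
  fixes k :: nat and tie :: "'a list \<Rightarrow> nat \<Rightarrow> 'a set \<Rightarrow> 'a" and I :: "'a list"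
  assumes k_ge_1: "k \<ge> 1"
    and tie_in: "\<And>i S. \<lbrakk>S \<noteq> {}; finite S\<rbrakk> \<Longrightarrow> tie I i S \<in> S"
begin

abbreviation lfd :: "nat \<Rightarrow> 'a set" where
  "lfd t \<equiv> lfd_cache tie k I t"

lemma lfd_victim_in: "\<lbrakk>finite X; X \<noteq> {}\<rbrakk> \<Longrightarrow> tie I t (lfd_cands I t X) \<in> X"
  using tie_in lfd_cands_nonempty lfd_cands_subset finite_subset by (metis subsetD)

lemma lfd_Suc:
  "lfd (Suc t) =
     (if I ! t \<in> lfd t then lfd t
      else if card (lfd t) < k then insert (I ! t) (lfd t)
      else insert (I ! t) (lfd t - {tie I t (lfd_cands I t (lfd t))}))"
  by (simp only: lfd_cache.simps lfd_step_def)

lemma lfd_Suc_subset: "lfd (Suc t) \<subseteq> insert (I ! t) (lfd t)"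
  unfolding lfd_Suc by auto

lemma lfd_finite_card_le: "finite (lfd t) \<and> card (lfd t) \<le> k"
proof (induction t)
  case (Suc t)
  then have fin: "finite (lfd t)" and card: "card (lfd t) \<le> k"
    by auto
  show ?case
  proof (cases "I ! t \<in> lfd t \<or> card (lfd t) < k")
    case True
    with fin card show ?thesis
      unfolding lfd_Suc by (auto simp: card_insert_if)
  next
    case False
    with k_ge_1 have "lfd t \<noteq> {}"
      by auto
    have "lfd (Suc t) = insert (I ! t) (lfd t - {tie I t (lfd_cands I t (lfd t))})"
      using False lfd_Suc[of t] by simp
    then have "card (lfd (Suc t)) \<le> card (lfd t)"
      using card_insert_Diff_singleton_le[OF fin lfd_victim_in[OF fin \<open>lfd t \<noteq> {}\<close>]] by simp
    with fin card False show ?thesis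
      unfolding lfd_Suc by simp
  qed
qed simp

lemma lfd_victim_furthest:
  assumes "finite X" and "u \<in> X"
  shows "next_use I (Suc t) u \<le> next_use I (Suc t) (tie I t (lfd_cands I t X))"
proof -
  let ?v = "tie I t (lfd_cands I t X)"
  let ?N = "{q \<in> X. \<forall>j. t < j \<and> j < length I \<longrightarrow> I ! j \<noteq> q}"
  have "?v \<in> lfd_cands I t X"
    using assms tie_in lfd_cands_nonempty lfd_cands_subset finite_subset by (metis empty_iff)
  show ?thesis
  proof (cases "?N = {}")
    case False
    then have "\<not> (\<exists>j. Suc t \<le> j \<and> j < length I \<and> I ! j = ?v)"
      using \<open>?v \<in> lfd_cands I t X\<close> by (auto simp: lfd_cands_def Let_def Suc_le_eq)
    then have "next_use I (Suc t) ?v = length I"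
      unfolding next_use_def by (rule if_not_P)
    then show ?thesis
      using next_use_le_length by metis
  next
    case True
    then have "next_use I (Suc t) q = next_req I t q" if "q \<in> X" for q
      using that by (auto simp: next_use_def next_req_def Suc_le_eq)
    with True \<open>?v \<in> lfd_cands I t X\<close> assms(2) show ?thesis
      by (auto simp: lfd_cands_def Let_def)
  qed
qed

lemma lfd_step_optimal:
  assumes Y: "Y \<in> next_caches k (I ! t) (lfd t)"
  shows "cost_to_go k I (Suc t) (lfd (Suc t)) \<le> cost_to_go k I (Suc t) Y"
proof (cases "I ! t \<in> lfd t \<or> card (lfd t) < k")
  case True
  then have "Y \<subseteq> lfd (Suc t)"
    using Y lfd_Suc[of t] by (auto simp: next_caches_def)
  then show ?thesis
    by (rule cost_to_go_antimono[OF k_ge_1])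
next
  case False
  let ?X = "lfd t" and ?r = "I ! t" and ?v = "tie I t (lfd_cands I t (lfd t))"
  have X: "finite ?X" "card ?X = k" "?r \<notin> ?X"
    using False lfd_finite_card_le[of t] by auto
  then have v: "?v \<in> ?X"
    using k_ge_1 by (intro lfd_victim_in) auto
  have step: "lfd (Suc t) = insert ?r (?X - {?v})"
    using False lfd_Suc[of t] by simp
  have "card Y < card (insert ?r ?X)"
    using Y X by (auto simp: next_caches_def)
  then obtain u where u: "u \<in> ?X" "u \<notin> Y"
    using Y card_mono[of Y "insert ?r ?X"] by (force simp: next_caches_def)
  have "Y \<subseteq> insert ?r (?X - {u})"
    using Y u by (auto simp: next_caches_def)
  then have evict_u: "cost_to_go k I (Suc t) (insert ?r (?X - {u})) \<le> cost_to_go k I (Suc t) Y"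
    by (rule cost_to_go_antimono[OF k_ge_1])
  show ?thesis
  proof (cases "u = ?v")
    case False
    have "insert u (insert ?r (?X - {u}) - {?v}) = lfd (Suc t)"
      using step u(1) v X(3) False by auto
    moreover have "next_use I (Suc t) u \<le> next_use I (Suc t) ?v"
      using lfd_victim_furthest X(1) u(1) by blast
    ultimately have "cost_to_go k I (Suc t) (lfd (Suc t)) \<le> cost_to_go k I (Suc t) (insert ?r (?X - {u}))"
      using cost_to_go_exchange[OF k_ge_1, of ?v "insert ?r (?X - {u})" u I "Suc t"] v X(3) u(1) False
      by auto
    with evict_u show ?thesis
      by simp
  qed (use evict_u step in simp)
qed

lemma lfd_faults_le_cost_to_go:
  "t \<le> length I \<Longrightarrow>
    card {s. t \<le> s \<and> s < length I \<and> I ! s \<notin> lfd s} \<le> cost_to_go k I t (lfd t)"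
proof (induction t rule: inc_induct)
  case (step t)
  obtain Y where Y: "Y \<in> next_caches k (I ! t) (lfd t)"
    and eq: "cost_to_go k I t (lfd t) = (if I ! t \<in> lfd t then 0 else 1) + cost_to_go k I (Suc t) Y"
    using cost_to_go_attained[OF k_ge_1 step.hyps(2)] by blast
  from step.IH lfd_step_optimal[OF Y] eq show ?case
    by (simp add: card_interval_filter_Suc[OF step.hyps(2)])
next
  case base
  have none: "{s. length I \<le> s \<and> s < length I \<and> I ! s \<notin> lfd s} = {}"
    by auto
  show ?case
    unfolding none by simp
qed

lemma lfd_faults_le_opt_cost: "card {s. s < length I \<and> I ! s \<notin> lfd s} \<le> opt_cost k I"
  using lfd_faults_le_cost_to_go[of 0] cost_to_go_le_opt_cost[OF k_ge_1, of I] by simp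

lemma lfd_subset_requested: "q \<in> lfd t \<Longrightarrow> \<exists>j<t. I ! j = q"
  using cache_subset_requested[of "lfd" t I q] lfd_Suc_subset by simp

lemma lfd_absent_until_requested:
  "\<lbrakk>q \<notin> lfd t'; t' \<le> t; \<forall>j. t' \<le> j \<and> j < t \<longrightarrow> I ! j \<noteq> q\<rbrakk> \<Longrightarrow> q \<notin> lfd t"
  using cache_absent_until_requested[of t' t lfd I q] lfd_Suc_subset by blast

end

section \<open>Prediction-guided LRU\<close>

(* Meaningless unless q is requested before t. *)
definition last_req :: "'a list \<Rightarrow> nat \<Rightarrow> 'a \<Rightarrow> nat" where
  "last_req I t q = Max {j. j < t \<and> I ! j = q}"

lemma
  assumes "\<exists>j<t. I ! j = q"
  shows last_req_less: "last_req I t q < t"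
    and nth_last_req: "I ! last_req I t q = q"
    and last_req_latest: "\<lbrakk>last_req I t q < j; j < t\<rbrakk> \<Longrightarrow> I ! j \<noteq> q"
proof -
  have fin: "finite {j. j < t \<and> I ! j = q}"
    by (rule finite_subset[of _ "{..<t}"]) auto
  have "last_req I t q \<in> {j. j < t \<and> I ! j = q}"
    unfolding last_req_def using assms fin by (intro Max_in) auto
  then show "last_req I t q < t" and "I ! last_req I t q = q"
    by auto
  show "\<lbrakk>last_req I t q < j; j < t\<rbrakk> \<Longrightarrow> I ! j \<noteq> q"
    unfolding last_req_def using fin Max_ge leD by blast
qed

lemma last_req_eqI:
  assumes "i < t" and "I ! i = q" and "\<And>j. \<lbrakk>i < j; j < t\<rbrakk> \<Longrightarrow> I ! j \<noteq> q"
  shows "last_req I t q = i"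
  unfolding last_req_def
proof (rule Max_eqI)
  show "finite {j. j < t \<and> I ! j = q}"
    by (rule finite_subset[of _ "{..<t}"]) auto
  show "y \<le> i" if "y \<in> {j. j < t \<and> I ! j = q}" for y
    using that assms(3) not_le by blast
qed (use assms in simp)

definition last_bit :: "('a \<times> bool) list \<Rightarrow> 'a \<Rightarrow> bool" where
  "last_bit h q = snd (h ! last_req (map fst h) (length h) q)"

definition discard_lru :: "'a policy" where
  "discard_lru h C =
     (if \<exists>q\<in>C. last_bit h q then SOME q. q \<in> C \<and> last_bit h q
      else SOME q. q \<in> C \<and>
        (\<forall>q'\<in>C. last_req (map fst h) (length h) q \<le> last_req (map fst h) (length h) q'))"

lemma ex_least_recent:
  "q \<in> C \<Longrightarrow> \<exists>q. q \<in> C \<and> (\<forall>q'\<in>C. last_req I t q \<le> last_req I t q')"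
  using ex_has_least_nat[of "\<lambda>q. q \<in> C"] by blast

lemma discard_lru_in:
  assumes "q \<in> C"
  shows "discard_lru h C \<in> C"
proof (cases "\<exists>q\<in>C. last_bit h q")
  case True
  then have "\<exists>q. q \<in> C \<and> last_bit h q"
    by blast
  from someI_ex[OF this] True show ?thesis
    by (simp add: discard_lru_def)
next
  case False
  from someI_ex[OF ex_least_recent[OF assms]] False show ?thesis
    by (simp add: discard_lru_def)
qed

lemma discard_lru_unpredicted:
  assumes "q \<in> C" and "\<not> last_bit h (discard_lru h C)"
  shows "\<forall>q\<in>C. \<not> last_bit h q"
    and "\<forall>q\<in>C. last_req (map fst h) (length h) (discard_lru h C) \<le> last_req (map fst h) (length h) q"
proof -
  show no_bit: "\<forall>q\<in>C. \<not> last_bit h q"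
  proof (rule ccontr)
    assume "\<not> (\<forall>q\<in>C. \<not> last_bit h q)"
    then have "\<exists>q. q \<in> C \<and> last_bit h q"
      by blast
    from someI_ex[OF this] assms(2) \<open>\<not> (\<forall>q\<in>C. \<not> last_bit h q)\<close> show False
      by (simp add: discard_lru_def)
  qed
  from someI_ex[OF ex_least_recent[OF assms(1)]] no_bit
  show "\<forall>q\<in>C. last_req (map fst h) (length h) (discard_lru h C) \<le> last_req (map fst h) (length h) q"
    by (simp add: discard_lru_def)
qed

declare alg_cache.simps(2) [simp del]

lemma alg_step_finite_card_le:
  assumes "k \<ge> 1" and "finite C" and "card C \<le> k"
  shows "finite (alg_step pol k h C r) \<and> card (alg_step pol k h C r) \<le> k"
proof (cases "r \<in> C \<or> card C < k")
  case True
  with assms show ?thesis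
    by (auto simp: alg_step_def card_insert_if)
next
  case False
  with assms(1) have "C \<noteq> {}"
    by auto
  then have "(if pol h C \<in> C then pol h C else (SOME x. x \<in> C)) \<in> C"
    by (simp add: some_in_eq)
  from card_insert_Diff_singleton_le[OF assms(2) this, of r] False assms show ?thesis
    by (simp add: alg_step_def Let_def)
qed

locale discard_lru_run = lfd_run +
  fixes p :: "bool list"
  assumes length_p: "length p = length I"
begin

abbreviation hist :: "nat \<Rightarrow> ('a \<times> bool) list" where
  "hist t \<equiv> take (Suc t) (zip I p)"

abbreviation alg :: "nat \<Rightarrow> 'a set" where
  "alg t \<equiv> alg_cache discard_lru k (zip I p) t"

lemma alg_Suc:
  assumes "t < length I"
  shows "alg (Suc t) =
     (if I ! t \<in> alg t then alg t
      else if card (alg t) < k then insert (I ! t) (alg t)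
      else insert (I ! t) (alg t - {discard_lru (hist t) (alg t)}))"
proof (cases "I ! t \<in> alg t \<or> card (alg t) < k")
  case True
  then show ?thesis
    using assms length_p by (auto simp: alg_cache.simps(2) alg_step_def)
next
  case False
  then obtain q where "q \<in> alg t"
    using k_ge_1 by fastforce
  then have "discard_lru (hist t) (alg t) \<in> alg t"
    by (rule discard_lru_in)
  with False show ?thesis
    using assms length_p by (simp add: alg_cache.simps(2) alg_step_def Let_def)
qed

lemma alg_Suc_subset: "t < length I \<Longrightarrow> alg (Suc t) \<subseteq> insert (I ! t) (alg t)"
  using alg_Suc by auto

lemma alg_request_in: "t < length I \<Longrightarrow> I ! t \<in> alg (Suc t)"
  using alg_Suc by auto

lemma alg_finite_card_le: "finite (alg t) \<and> card (alg t) \<le> k"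
  by (induction t) (simp_all add: alg_cache.simps(2) alg_step_finite_card_le[OF k_ge_1])

lemma alg_subset_requested: "\<lbrakk>t \<le> length I; q \<in> alg t\<rbrakk> \<Longrightarrow> \<exists>j<t. I ! j = q"
  using cache_subset_requested[of alg t I q] alg_Suc_subset by (simp add: alg_cache.simps(1))

lemma alg_evicted:
  assumes "t < length I" and "x \<in> alg t" and "x \<notin> alg (Suc t)"
  shows "I ! t \<notin> alg t" and "\<not> card (alg t) < k" and "x = discard_lru (hist t) (alg t)"
  using assms alg_Suc[OF assms(1)] by (auto split: if_splits)

lemma last_req_hist:
  assumes "t < length I" and "q \<noteq> I ! t"
  shows "last_req (map fst (hist t)) (length (hist t)) q = last_req I t q"
proof -
  have "map fst (hist t) = take (Suc t) I"
    using length_p by (simp add: take_map[symmetric])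
  moreover have "{j. j < Suc t \<and> take (Suc t) I ! j = q} = {j. j < t \<and> I ! j = q}"
    using assms(2) by (auto simp: less_Suc_eq)
  ultimately show ?thesis
    using assms(1) length_p by (simp add: last_req_def)
qed

lemma last_bit_hist:
  assumes "t < length I" and "q \<noteq> I ! t" and "\<exists>j<t. I ! j = q"
  shows "last_bit (hist t) q = p ! last_req I t q"
  using last_req_hist[OF assms(1,2)] last_req_less[OF assms(3)] assms(1) length_p
  by (simp add: last_bit_def)

section \<open>Competitive analysis\<close>

abbreviation truth :: "nat \<Rightarrow> bool" where
  "truth \<equiv> pstar tie k I"

lemma truth_last_reqI:
  assumes "\<exists>j<s. I ! j = q" and "s \<le> t" and "t \<le> length I" and "q \<notin> lfd t"
    and "\<And>j. \<lbrakk>s \<le> j; j < t\<rbrakk> \<Longrightarrow> I ! j \<noteq> q"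
  shows "truth (last_req I s q)"
  unfolding pstar_def
proof (intro exI[of _ t] conjI allI impI)
  show "last_req I s q < t" and "I ! last_req I s q \<notin> lfd t"
    using last_req_less[OF assms(1)] nth_last_req[OF assms(1)] assms(2,4) by simp_all
  show "I ! j \<noteq> I ! last_req I s q" if "last_req I s q < j \<and> j < t" for j
  proof (cases "j < s")
    case True
    with that show ?thesis
      using last_req_latest[OF assms(1)] nth_last_req[OF assms(1)] by simp
  next
    case False
    with that show ?thesis
      using assms(5) nth_last_req[OF assms(1)] by simp
  qed
qed (use assms in simp)

lemma full_fault_ex_cached_truth:
  assumes s: "s < length I" and fault: "I ! s \<notin> alg s" and full: "\<not> card (alg s) < k"
  shows "\<exists>e\<in>alg s. truth (last_req I s e)"
proof (rule ccontr)
  assume none: "\<not> (\<exists>e\<in>alg s. truth (last_req I s e))"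
  have requested: "\<exists>j<s. I ! j = e" if "e \<in> alg s" for e
    using alg_subset_requested s that by simp
  have "alg s \<subseteq> lfd s"
  proof
    fix e assume e: "e \<in> alg s"
    show "e \<in> lfd s"
    proof (rule ccontr)
      assume "e \<notin> lfd s"
      then have "truth (last_req I s e)"
        using requested[OF e] s by (intro truth_last_reqI) auto
      with none e show False
        by blast
    qed
  qed
  then have same: "alg s = lfd s"
    using lfd_finite_card_le[of s] full by (simp add: card_seteq)
  let ?w = "tie I s (lfd_cands I s (lfd s))"
  have "?w \<in> alg s"
    using full k_ge_1 lfd_finite_card_le[of s] unfolding same by (intro lfd_victim_in) auto
  moreover have "?w \<noteq> I ! s"
    using \<open>?w \<in> alg s\<close> fault by auto
  moreover have "?w \<notin> lfd (Suc s)"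
    using lfd_Suc[of s] fault full same \<open>?w \<noteq> I ! s\<close> by simp
  moreover have "\<exists>j<s. I ! j = ?w"
    using requested \<open>?w \<in> alg s\<close> by blast
  ultimately have "truth (last_req I s ?w)"
    using s by (intro truth_last_reqI[where t = "Suc s"]) (auto simp: less_Suc_eq_le dest: le_antisym)
  with none \<open>?w \<in> alg s\<close> show False
    by blast
qed

definition next_request :: "nat \<Rightarrow> nat \<Rightarrow> bool" where
  "next_request i t \<longleftrightarrow>
     i < t \<and> t < length I \<and> I ! t = I ! i \<and> (\<forall>j. i < j \<and> j < t \<longrightarrow> I ! j \<noteq> I ! i)"

lemma next_request_iff:
  "next_request i t \<longleftrightarrow> t < length I \<and> (\<exists>j<t. I ! j = I ! t) \<and> i = last_req I t (I ! t)"
proof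
  assume "next_request i t"
  then have "last_req I t (I ! t) = i"
    unfolding next_request_def by (intro last_req_eqI) auto
  with \<open>next_request i t\<close> show "t < length I \<and> (\<exists>j<t. I ! j = I ! t) \<and> i = last_req I t (I ! t)"
    unfolding next_request_def by auto
next
  assume prev: "t < length I \<and> (\<exists>j<t. I ! j = I ! t) \<and> i = last_req I t (I ! t)"
  then have ex: "\<exists>j<t. I ! j = I ! t"
    by blast
  with prev show "next_request i t"
    unfolding next_request_def
    using last_req_less[OF ex] nth_last_req[OF ex] last_req_latest[OF ex] by auto
qed

lemma next_request_unique:
  assumes "next_request i t" and "next_request i t'"
  shows "t = t'"
proof (rule ccontr)
  assume "t \<noteq> t'"
  then have "t < t' \<or> t' < t"
    by arith
  with assms show False
    unfolding next_request_def by auto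
qed

definition first_requests :: "nat set" where
  "first_requests = {t. t < length I \<and> (\<forall>j<t. I ! j \<noteq> I ! t)}"

definition alg_faults :: "nat set" where
  "alg_faults = {t. t < length I \<and> I ! t \<notin> alg t}"

definition lfd_faults :: "nat set" where
  "lfd_faults = {t. t < length I \<and> I ! t \<notin> lfd t}"

definition refaulted :: "nat set" where
  "refaulted = {i. \<exists>t. next_request i t \<and> I ! t \<notin> alg t}"

lemma finite_below_length: "S \<subseteq> {..<length I} \<Longrightarrow> finite S"
  using finite_subset by blast

lemma card_alg_faults_le: "card alg_faults \<le> card first_requests + card refaulted"
proof -
  let ?prev = "\<lambda>t. last_req I t (I ! t)"
  have repeat: "next_request (?prev t) t" if "t \<in> alg_faults - first_requests" for t
    using that by (auto simp: next_request_iff alg_faults_def first_requests_def)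
  have "inj_on ?prev (alg_faults - first_requests)"
    using repeat next_request_unique by (intro inj_onI) metis
  moreover have "?prev ` (alg_faults - first_requests) \<subseteq> refaulted"
    using repeat by (auto simp: refaulted_def alg_faults_def)
  moreover have "finite refaulted"
    by (rule finite_below_length) (auto simp: refaulted_def next_request_def)
  ultimately have "card (alg_faults - first_requests) \<le> card refaulted"
    by (rule card_inj_on_le)
  moreover have "card alg_faults \<le> card first_requests + card (alg_faults - first_requests)"
  proof -
    have "finite alg_faults" and "finite first_requests"
      by (auto intro: finite_below_length simp: alg_faults_def first_requests_def)
    then have "card alg_faults \<le> card (first_requests \<union> (alg_faults - first_requests))"
      by (intro card_mono) auto
    also have "\<dots> \<le> card first_requests + card (alg_faults - first_requests)"
      by (rule card_Un_le)
    finally show ?thesis .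
  qed
  ultimately show ?thesis
    by simp
qed

lemma first_requests_subset_lfd_faults: "first_requests \<subseteq> lfd_faults"
  unfolding first_requests_def lfd_faults_def using lfd_subset_requested by blast

lemma card_refaulted_truth_le: "card {i \<in> refaulted. truth i} \<le> card (lfd_faults - first_requests)"
proof -
  let ?prev = "\<lambda>t. last_req I t (I ! t)"
  have "{i \<in> refaulted. truth i} \<subseteq> ?prev ` (lfd_faults - first_requests)"
  proof
    fix i assume "i \<in> {i \<in> refaulted. truth i}"
    then obtain t where next_t: "next_request i t" and "truth i"
      by (auto simp: refaulted_def)
    then obtain t' where t': "i < t'" "t' \<le> length I" "I ! i \<notin> lfd t'"
      and unrequested: "\<forall>j. i < j \<and> j < t' \<longrightarrow> I ! j \<noteq> I ! i"
      by (auto simp: pstar_def)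
    have "t' \<le> t"
      using next_t unrequested unfolding next_request_def by (meson not_le)
    moreover have "\<forall>j. t' \<le> j \<and> j < t \<longrightarrow> I ! j \<noteq> I ! i"
      using next_t t'(1) unfolding next_request_def by auto
    ultimately have "I ! t \<notin> lfd t"
      using lfd_absent_until_requested[OF t'(3)] next_t unfolding next_request_def by auto
    then show "i \<in> ?prev ` (lfd_faults - first_requests)"
      using next_t unfolding next_request_iff by (auto simp: lfd_faults_def first_requests_def)
  qed
  moreover have "finite (lfd_faults - first_requests)"
    by (rule finite_below_length) (auto simp: lfd_faults_def)
  ultimately show ?thesis
    by (meson card_image_le card_mono finite_imageI order_trans)
qed

definition missed_evictions :: "nat set" where
  "missed_evictions = {c. c < length p \<and> \<not> p ! c \<and> truth c}"

definition wrong_evictions :: "nat set" where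
  "wrong_evictions = {c. c < length p \<and> p ! c \<and> \<not> truth c}"

lemma card_refaulted_predicted_le: "card {i \<in> refaulted. \<not> truth i \<and> p ! i} \<le> card wrong_evictions"
proof (rule card_mono)
  show "finite wrong_evictions"
    by (rule finite_below_length) (auto simp: wrong_evictions_def length_p)
  show "{i \<in> refaulted. \<not> truth i \<and> p ! i} \<subseteq> wrong_evictions"
    using length_p by (auto simp: refaulted_def next_request_def wrong_evictions_def)
qed

definition charged :: "nat \<Rightarrow> nat \<Rightarrow> nat \<Rightarrow> bool" where
  "charged i s c \<longleftrightarrow>
     i < c \<and> c < s \<and> s < length I \<and> I ! i \<in> alg s \<and> I ! i \<notin> alg (Suc s)
     \<and> (\<forall>j. i < j \<and> j < s \<longrightarrow> I ! j \<noteq> I ! i) \<and> c \<in> missed_evictions"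

lemma unpredicted_eviction_ex_missed:
  assumes s: "s < length I" and evicted: "I ! i \<in> alg s" "I ! i \<notin> alg (Suc s)"
    and "i < s" and unrequested: "\<forall>j. i < j \<and> j < s \<longrightarrow> I ! j \<noteq> I ! i"
    and "\<not> p ! i" and "\<not> truth i"
  shows "\<exists>c. i < c \<and> c < s \<and> c \<in> missed_evictions"
proof -
  note victim = alg_evicted[OF s evicted]
  have "I ! i \<noteq> I ! s"
    using victim(1) evicted(1) by auto
  have last_i: "last_req I s (I ! i) = i"
    using \<open>i < s\<close> unrequested by (intro last_req_eqI) auto
  have "\<exists>j<s. I ! j = I ! i"
    using \<open>i < s\<close> by blast
  then have "\<not> last_bit (hist s) (discard_lru (hist s) (alg s))"
    using last_bit_hist[OF s \<open>I ! i \<noteq> I ! s\<close>] last_i victim(3) \<open>\<not> p ! i\<close> by simp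
  note lru = discard_lru_unpredicted[OF evicted(1) this]
  obtain e where e: "e \<in> alg s" "truth (last_req I s e)"
    using full_fault_ex_cached_truth[OF s victim(1,2)] by blast
  have "e \<noteq> I ! s"
    using e victim(1) by auto
  have req_e: "\<exists>j<s. I ! j = e"
    using alg_subset_requested s e(1) by simp
  have "last_req (map fst (hist s)) (length (hist s)) (I ! i)
      \<le> last_req (map fst (hist s)) (length (hist s)) e"
    using lru(2) e(1) victim(3) by simp
  then have "i \<le> last_req I s e"
    unfolding last_req_hist[OF s \<open>I ! i \<noteq> I ! s\<close>] last_req_hist[OF s \<open>e \<noteq> I ! s\<close>] last_i
    .
  moreover have "last_req I s e \<noteq> i"
    using e(2) \<open>\<not> truth i\<close> by auto
  moreover have "\<not> p ! last_req I s e"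
    using lru(1) e(1) last_bit_hist[OF s \<open>e \<noteq> I ! s\<close> req_e] by simp
  moreover have "last_req I s e < s"
    using last_req_less[OF req_e] .
  ultimately show ?thesis
    using s e(2) length_p by (intro exI[of _ "last_req I s e"]) (auto simp: missed_evictions_def)
qed

lemma refaulted_unpredicted_charged:
  assumes next_t: "next_request i t" and fault: "I ! t \<notin> alg t" and "\<not> truth i" and "\<not> p ! i"
  shows "\<exists>s c. charged i s c"
proof -
  have i: "i < t" "t < length I" "I ! t = I ! i" "\<forall>j. i < j \<and> j < t \<longrightarrow> I ! j \<noteq> I ! i"
    using next_t unfolding next_request_def by auto
  have "I ! i \<in> alg (Suc i)"
    using alg_request_in i by simp
  moreover have "I ! i \<notin> alg t"
    using fault i by simp
  ultimately obtain s where s: "Suc i \<le> s" "s < t" "I ! i \<in> alg s" "I ! i \<notin> alg (Suc s)"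
    using ex_last_before_change[of "\<lambda>s. I ! i \<in> alg s" "Suc i" t] i by auto
  moreover have unrequested: "\<forall>j. i < j \<and> j < s \<longrightarrow> I ! j \<noteq> I ! i"
    using i s by auto
  moreover have "s < length I"
    using s i by simp
  ultimately obtain c where "i < c" "c < s" "c \<in> missed_evictions"
    using unpredicted_eviction_ex_missed assms(3,4) by (metis Suc_le_lessD)
  with s unrequested \<open>s < length I\<close> show ?thesis
    unfolding charged_def by blast
qed

definition unrequested_since :: "nat \<Rightarrow> nat \<Rightarrow> 'a set" where
  "unrequested_since c s = {q \<in> alg s. \<forall>j. c \<le> j \<and> j < s \<longrightarrow> I ! j \<noteq> q}"

lemma unrequested_since_Suc_subset:
  assumes "c \<le> s" and "s < length I"
  shows "unrequested_since c (Suc s) \<subseteq> unrequested_since c s"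
proof
  fix q assume q: "q \<in> unrequested_since c (Suc s)"
  then have "I ! s \<noteq> q"
    using assms(1) by (auto simp: unrequested_since_def)
  with q have "q \<in> alg s"
    using alg_Suc_subset[OF assms(2)] by (auto simp: unrequested_since_def)
  with q show "q \<in> unrequested_since c s"
    by (auto simp: unrequested_since_def)
qed

lemma unrequested_since_start:
  assumes "c < length I"
  shows "finite (unrequested_since c (Suc c))" and "card (unrequested_since c (Suc c)) \<le> k - 1"
proof -
  have sub: "unrequested_since c (Suc c) \<subseteq> alg (Suc c) - {I ! c}"
    by (auto simp: unrequested_since_def)
  have fin: "finite (alg (Suc c))" and "card (alg (Suc c)) \<le> k"
    using alg_finite_card_le by auto
  moreover have "card (alg (Suc c) - {I ! c}) = card (alg (Suc c)) - 1"
    using alg_request_in[OF assms] fin by simp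
  ultimately show "card (unrequested_since c (Suc c)) \<le> k - 1"
    using card_mono[OF _ sub] by simp
  show "finite (unrequested_since c (Suc c))"
    using finite_subset[OF sub] fin by simp
qed

lemma card_charged_le:
  assumes "c < length I"
  shows "card {i. \<exists>s. charged i s c} \<le> k - 1"
proof -
  let ?shrinks = "{s. Suc c \<le> s \<and> s < length I \<and> unrequested_since c (Suc s) \<noteq> unrequested_since c s}"
  let ?evicted_prev = "\<lambda>s. last_req I s (discard_lru (hist s) (alg s))"
  have "card ?shrinks + card (unrequested_since c (length I)) \<le> card (unrequested_since c (Suc c))"
    using assms unrequested_since_Suc_subset unrequested_since_start(1)
    by (intro card_changes_decreasing_le) auto
  then have "card ?shrinks \<le> k - 1"
    using unrequested_since_start(2)[OF assms] by simp
  moreover have "{i. \<exists>s. charged i s c} \<subseteq> ?evicted_prev ` ?shrinks"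
  proof
    fix i assume "i \<in> {i. \<exists>s. charged i s c}"
    then obtain s where "charged i s c"
      by blast
    then have s: "i < c" "c < s" "s < length I" "I ! i \<in> alg s" "I ! i \<notin> alg (Suc s)"
      and unrequested: "\<forall>j. i < j \<and> j < s \<longrightarrow> I ! j \<noteq> I ! i"
      by (auto simp: charged_def)
    have "I ! i \<in> unrequested_since c s" and "I ! i \<notin> unrequested_since c (Suc s)"
      using s unrequested by (auto simp: unrequested_since_def)
    then have "s \<in> ?shrinks"
      using s by auto
    moreover have "last_req I s (I ! i) = i"
      using s unrequested by (intro last_req_eqI) auto
    then have "i = ?evicted_prev s"
      using alg_evicted(3)[OF s(3-5)] by simp
    ultimately show "i \<in> ?evicted_prev ` ?shrinks"
      by blast
  qed
  moreover have "finite ?shrinks"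
    by (rule finite_below_length) auto
  ultimately have "card {i. \<exists>s. charged i s c} \<le> card ?shrinks"
    by (meson card_image_le card_mono finite_imageI order_trans)
  with \<open>card ?shrinks \<le> k - 1\<close> show ?thesis
    by simp
qed

lemma card_refaulted_unpredicted_le:
  "card {i \<in> refaulted. \<not> truth i \<and> \<not> p ! i} \<le> (k - 1) * card missed_evictions"
proof -
  have fin: "finite missed_evictions"
    by (rule finite_below_length) (auto simp: missed_evictions_def length_p)
  have fin_charged: "finite {i. \<exists>s. charged i s c}" for c
    by (rule finite_below_length) (auto simp: charged_def)
  have "{i \<in> refaulted. \<not> truth i \<and> \<not> p ! i}
      \<subseteq> (\<Union>c\<in>missed_evictions. {i. \<exists>s. charged i s c})"
  proof
    fix i assume "i \<in> {i \<in> refaulted. \<not> truth i \<and> \<not> p ! i}"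
    then obtain t where "next_request i t" "I ! t \<notin> alg t" "\<not> truth i" "\<not> p ! i"
      by (auto simp: refaulted_def)
    then obtain s c where "charged i s c"
      using refaulted_unpredicted_charged by blast
    then show "i \<in> (\<Union>c\<in>missed_evictions. {i. \<exists>s. charged i s c})"
      by (auto simp: charged_def)
  qed
  then have "card {i \<in> refaulted. \<not> truth i \<and> \<not> p ! i}
      \<le> card (\<Union>c\<in>missed_evictions. {i. \<exists>s. charged i s c})"
    using fin fin_charged by (intro card_mono) auto
  also have "\<dots> \<le> (\<Sum>c\<in>missed_evictions. card {i. \<exists>s. charged i s c})"
    by (rule card_UN_le[OF fin])
  also have "\<dots> \<le> (\<Sum>c\<in>missed_evictions. k - 1)"
    using length_p by (intro sum_mono card_charged_le) (simp add: missed_evictions_def)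
  finally show ?thesis
    by (simp add: mult.commute)
qed

lemma card_alg_faults_bound:
  "card alg_faults \<le> card lfd_faults + (k - 1) * card missed_evictions + card wrong_evictions"
proof -
  let ?A = "{i \<in> refaulted. truth i}" and ?B = "{i \<in> refaulted. \<not> truth i \<and> p ! i}"
    and ?C = "{i \<in> refaulted. \<not> truth i \<and> \<not> p ! i}"
  have "card refaulted = card (?A \<union> ?B \<union> ?C)"
    by (rule arg_cong[where f = card]) blast
  also have "\<dots> \<le> card (?A \<union> ?B) + card ?C"
    by (rule card_Un_le)
  also have "\<dots> \<le> card ?A + card ?B + card ?C"
    using card_Un_le[of ?A ?B] by simp
  finally have refaulted: "card refaulted \<le> card ?A + card ?B + card ?C" .
  have "finite lfd_faults"
    by (rule finite_below_length) (auto simp: lfd_faults_def)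
  then have "card (lfd_faults - first_requests) = card lfd_faults - card first_requests"
    and "card first_requests \<le> card lfd_faults"
    using first_requests_subset_lfd_faults by (auto simp: card_Diff_subset finite_subset card_mono)
  with refaulted show ?thesis
    using card_alg_faults_le card_refaulted_truth_le card_refaulted_predicted_le
      card_refaulted_unpredicted_le by linarith
qed

lemma discard_lru_competitive:
  "alg_cost discard_lru k (zip I p)
     \<le> opt_cost k I + (k - 1) * eta False p truth + eta True p truth"
proof -
  have "{t. t < length (zip I p) \<and> fst (zip I p ! t) \<notin> alg t} = alg_faults"
    using length_p by (auto simp: alg_faults_def)
  then have "alg_cost discard_lru k (zip I p) = card alg_faults"
    by (simp add: alg_cost_def)
  moreover have "eta False p truth = card missed_evictions" and "eta True p truth = card wrong_evictions"
    by (simp_all add: eta_def missed_evictions_def wrong_evictions_def)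
  moreover have "card lfd_faults \<le> opt_cost k I"
    using lfd_faults_le_opt_cost by (simp add: lfd_faults_def)
  ultimately show ?thesis
    using card_alg_faults_bound by simp
qed

end

theorem theorem1:
  fixes k :: nat and tie :: "'a list \<Rightarrow> nat \<Rightarrow> 'a set \<Rightarrow> 'a"
  assumes "k \<ge> 1"
    and "\<And>I i S. S \<noteq> {} \<Longrightarrow> finite S \<Longrightarrow> tie I i S \<in> S"
  shows "\<exists>(pol :: 'a policy) (b :: real). \<forall>(I :: 'a list) (p :: bool list).
           length p = length I \<longrightarrow>
           real (alg_cost pol k (zip I p))
             \<le> real (opt_cost k I) + real (k - 1) * real (eta False p (pstar tie k I))
                + real (eta True p (pstar tie k I)) + b"
proof (intro exI[of _ discard_lru] exI[of _ 0] allI impI)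
  fix I :: "'a list" and p :: "bool list"
  assume "length p = length I"
  then interpret discard_lru_run k tie I p
    using assms by unfold_locales auto
  from of_nat_mono[OF discard_lru_competitive, where 'a = real]
  show "real (alg_cost discard_lru k (zip I p))
      \<le> real (opt_cost k I) + real (k - 1) * real (eta False p (pstar tie k I))
         + real (eta True p (pstar tie k I)) + 0"
    by simp
qed

end
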